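(* Let $\mu$ be a probability measure on $\mathbb{R}$ with support in a bounded interval $[a,b]$ and $\operatorname{Ent}(\mu|\mathcal L^1)<\infty$, and suppose the interior of $A\cap\operatorname{supp}\mu$ is $\bigcup_i(a_i,b_i)$ with pairwise disjoint intervals. Let $l(x)=\min\{x-a_i,b_i-x\}$ for $x\in(a_i,b_i)$. Then $\int_{\bigcup_i(a_i,b_i)}|\log l(x)|\,d\mu(x)<\infty$ (and hence $-\sum_i\int_{a_i}^{b_i}\log(\min\{x-a_i,b_i-x\})\,d\mu(x)<\infty$) in each of the following cases: (H1a) $\mu$ has bounded density on $A$ and $\sum_i(b_i-a_i)\,|\log(b_i-a_i)|<\infty$; (H1b) $\sum_i(b_i-a_i)^{1-\delta}<\infty$ for some $\delta\in(0,1)$.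
   Context: $A$ is any Borel subset of $\mathbb{R}$ (in the paper, $A=\{x: F_\mu(x)=F_\nu(x)\}$ for a second probability measure $\nu$, $F_\rho$ denoting cumulative distribution functions). $\operatorname{Ent}(\mu|\mathcal L^1)=\int\log\frac{d\mu}{dx}\,d\mu$. *)

theory Defs
  imports "HOL-Probability.Probability"
begin

definition msupp :: "real measure \<Rightarrow> real set" where
  "msupp M = {x. \<forall>e>0. emeasure M (ball x e) > 0}"

definition endpoint_dist ::
  "'i set \<Rightarrow> ('i \<Rightarrow> real) \<Rightarrow> ('i \<Rightarrow> real) \<Rightarrow> real \<Rightarrow> real" where
  "endpoint_dist I ai bi x =
     (let i = (THE i. i \<in> I \<and> x \<in> {ai i<..<bi i}) in min (x - ai i) (bi i - x))"

end

theory Submission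
  imports Defs
begin

text \<open>
  Let l be the distance to the nearest endpoint and L_i = b_i - a_i. Reflecting a component at
  its midpoint gives  int_(a_i,b_i) psi(l) <= 2 int_0^L_i psi  for every nonnegative psi, and
  countable additivity sums this over the components. With a bounded density it remains to use
  int_0^L |ln t| dt <= L |ln L| + 4 L.  In general, Young's inequality  y s <= y ln+ y + e^s
  with  s = delta |ln l|  gives  delta f |ln l| <= f ln+ f + l^(-delta) + (b - a)^delta:
  the first term integrates to the entropy, and  int_0^L t^(-delta) dt = L^(1-delta) / (1 - delta)
  is summable by hypothesis.
\<close>

lemma abs_ln_le_powr:
  fixes t L :: real
  assumes "0 < t" "t \<le> L"
  shows "\<bar>ln t\<bar> \<le> \<bar>ln L\<bar> + 2 * sqrt L * t powr (-1/2)"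
proof -
  have "ln t \<le> ln L"
    using assms by simp
  then have "\<bar>ln t\<bar> \<le> \<bar>ln L\<bar> + (ln L - ln t)"
    by arith
  also have "ln L - ln t = ln (L / t)"
    using assms by (simp add: ln_div)
  also have "ln (L / t) = 2 * ln (sqrt (L / t))"
    using assms by (simp add: ln_sqrt)
  also have "ln (sqrt (L / t)) \<le> sqrt (L / t)"
    using assms by (intro less_imp_le ln_less_self) simp
  also have "sqrt (L / t) = sqrt L * t powr (-1/2)"
    using assms by (simp add: real_sqrt_divide powr_minus_divide powr_half_sqrt)
  finally show ?thesis by simp
qed

lemma mult_le_entropy_plus_exp:
  fixes y s :: real
  assumes "0 \<le> y"
  shows "y * s \<le> y * max 0 (ln y) + exp s"
proof (cases "y = 0")
  case False
  with assms have y: "0 < y"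
    by simp
  have "y * (1 + (s - ln y)) \<le> y * exp (s - ln y)"
    using y by (intro mult_left_mono exp_ge_add_one_self) auto
  also have "\<dots> = exp s"
    using y by (simp add: exp_diff)
  finally have "y * s \<le> exp s + y * ln y - y"
    by (simp add: algebra_simps)
  moreover have "y * ln y \<le> y * max 0 (ln y)"
    using y by (intro mult_left_mono) auto
  ultimately show ?thesis
    using y by linarith
qed simp

lemma exp_mult_abs_ln_le:
  fixes l \<delta> :: real
  assumes "0 < l"
  shows "exp (\<delta> * \<bar>ln l\<bar>) \<le> l powr (-\<delta>) + l powr \<delta>"
  using assms by (cases "0 \<le> ln l") (simp_all add: powr_def)

lemma mult_abs_ln_le_entropy_plus_powr:
  fixes y l \<delta> D :: real
  assumes "0 \<le> y" "0 < \<delta>" "0 < l" "l \<le> D"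
  shows "y * \<bar>ln l\<bar> \<le> 1 / \<delta> * (y * max 0 (ln y) + l powr (-\<delta>) + D powr \<delta>)"
proof -
  have "\<delta> * (y * \<bar>ln l\<bar>) \<le> y * max 0 (ln y) + exp (\<delta> * \<bar>ln l\<bar>)"
    using mult_le_entropy_plus_exp[OF assms(1), of "\<delta> * \<bar>ln l\<bar>"] by (simp add: mult_ac)
  also have "exp (\<delta> * \<bar>ln l\<bar>) \<le> l powr (-\<delta>) + l powr \<delta>"
    using assms(3) by (rule exp_mult_abs_ln_le)
  also have "l powr \<delta> \<le> D powr \<delta>"
    using assms by (intro powr_mono2) auto
  finally show ?thesis
    using assms(2) by (simp add: field_simps)
qed

lemma nn_integral_powr_Ioo:
  fixes L p :: real
  assumes "0 < L" "-1 < p"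
  shows "(\<integral>\<^sup>+t\<in>{0<..<L}. ennreal (t powr p) \<partial>lborel) = ennreal (L powr (p + 1) / (p + 1))"
proof (rule nn_integral_has_integral_lebesgue')
  show "((\<lambda>t. t powr p) has_integral L powr (p + 1) / (p + 1)) {0<..<L}"
    using has_integral_powr_from_0[of p L] assms by (simp add: has_integral_Icc_iff_Ioo)
qed simp

lemma nn_integral_abs_ln_Ioo_le:
  fixes L :: real
  assumes "0 < L"
  shows "(\<integral>\<^sup>+t\<in>{0<..<L}. ennreal \<bar>ln t\<bar> \<partial>lborel) \<le> ennreal (L * \<bar>ln L\<bar>) + 4 * ennreal L"
proof -
  have "ennreal \<bar>ln t\<bar> \<le> ennreal \<bar>ln L\<bar> + ennreal (2 * sqrt L) * ennreal (t powr (-1/2))"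
    if "t \<in> {0<..<L}" for t
  proof -
    have "ennreal \<bar>ln t\<bar> \<le> ennreal (\<bar>ln L\<bar> + 2 * sqrt L * t powr (-1/2))"
      using that by (intro ennreal_leI abs_ln_le_powr) auto
    also have "\<dots> = ennreal \<bar>ln L\<bar> + ennreal (2 * sqrt L) * ennreal (t powr (-1/2))"
      using assms by (simp add: ennreal_plus ennreal_mult)
    finally show ?thesis .
  qed
  then have "(\<integral>\<^sup>+t\<in>{0<..<L}. ennreal \<bar>ln t\<bar> \<partial>lborel)
      \<le> (\<integral>\<^sup>+t\<in>{0<..<L}. ennreal \<bar>ln L\<bar> + ennreal (2 * sqrt L) * ennreal (t powr (-1/2)) \<partial>lborel)"
    by (intro nn_integral_mono) (simp split: split_indicator)
  also have "\<dots> = (\<integral>\<^sup>+t\<in>{0<..<L}. ennreal \<bar>ln L\<bar> \<partial>lborel)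
      + ennreal (2 * sqrt L) * (\<integral>\<^sup>+t\<in>{0<..<L}. ennreal (t powr (-1/2)) \<partial>lborel)"
    by (simp add: distrib_right nn_integral_add nn_integral_cmult mult.assoc)
  also have "(\<integral>\<^sup>+t\<in>{0<..<L}. ennreal (t powr (-1/2)) \<partial>lborel) = ennreal (2 * sqrt L)"
    using assms nn_integral_powr_Ioo[of L "-1/2"] by (simp add: powr_half_sqrt mult.commute)
  also have "(\<integral>\<^sup>+t\<in>{0<..<L}. ennreal \<bar>ln L\<bar> \<partial>lborel) = ennreal \<bar>ln L\<bar> * ennreal L"
    using assms by (simp add: nn_integral_cmult_indicator)
  also have "ennreal \<bar>ln L\<bar> * ennreal L + ennreal (2 * sqrt L) * ennreal (2 * sqrt L)
      = ennreal (L * \<bar>ln L\<bar>) + 4 * ennreal L"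
  proof -
    have "ennreal (2 * sqrt L) * ennreal (2 * sqrt L) = ennreal (2 * sqrt L * (2 * sqrt L))"
      using assms by (intro ennreal_mult[symmetric]) simp_all
    also have "2 * sqrt L * (2 * sqrt L) = 4 * L"
      using assms by (simp add: power2_eq_square[symmetric] power_mult_distrib)
    finally have "ennreal (2 * sqrt L) * ennreal (2 * sqrt L) = 4 * ennreal L"
      using assms by (simp add: ennreal_mult)
    moreover have "ennreal \<bar>ln L\<bar> * ennreal L = ennreal (L * \<bar>ln L\<bar>)"
      using assms by (simp add: ennreal_mult mult.commute)
    ultimately show ?thesis
      by simp
  qed
  finally show ?thesis .
qed

lemma nn_integral_min_dist_endpoints_le:
  fixes \<psi> :: "real \<Rightarrow> ennreal"
  assumes [measurable]: "\<psi> \<in> borel_measurable borel"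
  shows "(\<integral>\<^sup>+x\<in>{\<alpha><..<\<beta>}. \<psi> (min (x - \<alpha>) (\<beta> - x)) \<partial>lborel)
    \<le> 2 * (\<integral>\<^sup>+t\<in>{0<..<\<beta> - \<alpha>}. \<psi> t \<partial>lborel)"
proof -
  have "(\<integral>\<^sup>+x\<in>{\<alpha><..<\<beta>}. \<psi> (min (x - \<alpha>) (\<beta> - x)) \<partial>lborel)
      \<le> (\<integral>\<^sup>+x. \<psi> (x - \<alpha>) * indicator {\<alpha><..<\<beta>} x + \<psi> (\<beta> - x) * indicator {\<alpha><..<\<beta>} x \<partial>lborel)"
    by (intro nn_integral_mono) (auto simp: min_def add_increasing add_increasing2 split: split_indicator)
  also have "\<dots> = (\<integral>\<^sup>+x\<in>{\<alpha><..<\<beta>}. \<psi> (x - \<alpha>) \<partial>lborel) + (\<integral>\<^sup>+x\<in>{\<alpha><..<\<beta>}. \<psi> (\<beta> - x) \<partial>lborel)"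
    by (rule nn_integral_add) measurable
  also have "(\<integral>\<^sup>+x\<in>{\<alpha><..<\<beta>}. \<psi> (x - \<alpha>) \<partial>lborel) = (\<integral>\<^sup>+t\<in>{0<..<\<beta> - \<alpha>}. \<psi> t \<partial>lborel)"
  proof -
    have "(\<integral>\<^sup>+x\<in>{\<alpha><..<\<beta>}. \<psi> (x - \<alpha>) \<partial>lborel)
        = ennreal \<bar>1\<bar> * (\<integral>\<^sup>+x. \<psi> ((\<alpha> + 1 * x) - \<alpha>) * indicator {\<alpha><..<\<beta>} (\<alpha> + 1 * x) \<partial>lborel)"
      by (rule nn_integral_real_affine) simp_all
    then show ?thesis
      by (simp, intro nn_integral_cong) (auto split: split_indicator)
  qed
  also have "(\<integral>\<^sup>+x\<in>{\<alpha><..<\<beta>}. \<psi> (\<beta> - x) \<partial>lborel) = (\<integral>\<^sup>+t\<in>{0<..<\<beta> - \<alpha>}. \<psi> t \<partial>lborel)"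
  proof -
    have "(\<integral>\<^sup>+x\<in>{\<alpha><..<\<beta>}. \<psi> (\<beta> - x) \<partial>lborel)
        = ennreal \<bar>-1\<bar> * (\<integral>\<^sup>+x. \<psi> (\<beta> - (\<beta> + (-1) * x)) * indicator {\<alpha><..<\<beta>} (\<beta> + (-1) * x) \<partial>lborel)"
      by (rule nn_integral_real_affine) simp_all
    then show ?thesis
      by (simp, intro nn_integral_cong) (auto split: split_indicator)
  qed
  finally show ?thesis
    by (simp only: mult_2)
qed

lemma set_nn_integral_UN_countable:
  fixes g :: "'a \<Rightarrow> ennreal"
  assumes [measurable]: "g \<in> borel_measurable M"
    and "countable I" "\<And>i. i \<in> I \<Longrightarrow> X i \<in> sets M" "disjoint_family_on X I"
  shows "(\<integral>\<^sup>+x\<in>(\<Union>i\<in>I. X i). g x \<partial>M) = (\<integral>\<^sup>+i. (\<integral>\<^sup>+x\<in>X i. g x \<partial>M) \<partial>count_space I)"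
proof -
  have "(\<integral>\<^sup>+x\<in>(\<Union>i\<in>I. X i). g x \<partial>M) = emeasure (density M g) (\<Union>i\<in>I. X i)"
    using assms by (simp add: emeasure_density sets.countable_UN'')
  also have "\<dots> = (\<integral>\<^sup>+i. emeasure (density M g) (X i) \<partial>count_space I)"
    using assms by (intro emeasure_UN_countable) auto
  also have "\<dots> = (\<integral>\<^sup>+i. (\<integral>\<^sup>+x\<in>X i. g x \<partial>M) \<partial>count_space I)"
    using assms by (intro nn_integral_cong) (simp add: emeasure_density)
  finally show ?thesis .
qed

lemma nn_integral_count_space_finite_if_summable_on:
  fixes g :: "'i \<Rightarrow> real"
  assumes "g summable_on I" "\<And>i. i \<in> I \<Longrightarrow> 0 \<le> g i"
  shows "(\<integral>\<^sup>+i. ennreal (g i) \<partial>count_space I) < \<infinity>"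
proof -
  have "Infinite_Set_Sum.abs_summable_on g I"
    using assms(1) abs_summable_equivalent summable_on_iff_abs_summable_on_real by blast
  then have "integrable (count_space I) g"
    by (simp add: abs_summable_on_def)
  then show ?thesis
    using integrableD(2) by (simp add: less_top)
qed

lemma countable_disjoint_Ioo_family:
  fixes ai bi :: "'i \<Rightarrow> real"
  assumes "\<And>i. i \<in> I \<Longrightarrow> ai i < bi i"
    and "disjoint_family_on (\<lambda>i. {ai i<..<bi i}) I"
  shows "countable I"
proof -
  have "inj_on (\<lambda>i. {ai i<..<bi i}) I"
  proof (rule inj_onI)
    fix i j
    assume i: "i \<in> I" and j: "j \<in> I" and eq: "{ai i<..<bi i} = {ai j<..<bi j}"
    show "i = j"
    proof (rule ccontr)
      assume "i \<noteq> j"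
      with assms(2) i j have "{ai i<..<bi i} \<inter> {ai j<..<bi j} = {}"
        unfolding disjoint_family_on_def by blast
      with eq have empty: "{ai i<..<bi i} = {}"
        by simp
      have "(ai i + bi i) / 2 \<in> {ai i<..<bi i}"
        using assms(1)[OF i] by simp
      with empty show False
        by simp
    qed
  qed
  moreover have "countable ((\<lambda>i. {ai i<..<bi i}) ` I)"
    using assms(2) by (intro countable_disjoint_open_subsets)
      (auto simp: disjoint_family_on_def pairwise_def disjnt_def)
  ultimately show ?thesis
    by (blast intro: countable_image_inj_on)
qed

lemma nn_integral_interval_lengths_le:
  fixes ai bi :: "'i \<Rightarrow> real"
  assumes "\<And>i. i \<in> I \<Longrightarrow> ai i < bi i" "disjoint_family_on (\<lambda>i. {ai i<..<bi i}) I"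
    and "(\<Union>i\<in>I. {ai i<..<bi i}) \<subseteq> S" "S \<in> sets borel"
  shows "(\<integral>\<^sup>+i. ennreal (bi i - ai i) \<partial>count_space I) \<le> emeasure lborel S"
proof -
  have "(\<integral>\<^sup>+i. ennreal (bi i - ai i) \<partial>count_space I) = (\<integral>\<^sup>+i. emeasure lborel {ai i<..<bi i} \<partial>count_space I)"
    using assms(1) by (intro nn_integral_cong) (simp add: less_imp_le)
  also have "\<dots> = emeasure lborel (\<Union>i\<in>I. {ai i<..<bi i})"
    using assms(1,2) countable_disjoint_Ioo_family
    by (intro emeasure_UN_countable[symmetric]) auto
  also have "\<dots> \<le> emeasure lborel S"
    using assms(3,4) by (intro emeasure_mono) auto
  finally show ?thesis .
qed

lemma endpoint_dist_eq:
  fixes ai bi :: "'i \<Rightarrow> real"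
  assumes "disjoint_family_on (\<lambda>i. {ai i<..<bi i}) I" "i \<in> I" "x \<in> {ai i<..<bi i}"
  shows "endpoint_dist I ai bi x = min (x - ai i) (bi i - x)"
proof -
  have "(THE j. j \<in> I \<and> x \<in> {ai j<..<bi j}) = i"
    using assms unfolding disjoint_family_on_def by (intro the_equality) blast+
  then show ?thesis
    by (simp add: endpoint_dist_def)
qed

lemma endpoint_dist_pos_le:
  fixes ai bi :: "'i \<Rightarrow> real"
  assumes disj: "disjoint_family_on (\<lambda>i. {ai i<..<bi i}) I"
    and sub: "(\<Union>i\<in>I. {ai i<..<bi i}) \<subseteq> {a..b}" and x: "x \<in> (\<Union>i\<in>I. {ai i<..<bi i})"
  shows "0 < endpoint_dist I ai bi x \<and> endpoint_dist I ai bi x \<le> b - a"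
proof -
  obtain i where i: "i \<in> I" "x \<in> {ai i<..<bi i}"
    using x by blast
  define l where "l = endpoint_dist I ai bi x"
  have l: "l = min (x - ai i) (bi i - x)"
    unfolding l_def using disj i by (rule endpoint_dist_eq)
  then have "x - l / 2 \<in> {ai i<..<bi i}" "x + l / 2 \<in> {ai i<..<bi i}"
    using i by (auto simp: min_def field_simps)
  then have "x - l / 2 \<in> {a..b}" "x + l / 2 \<in> {a..b}"
    using i sub by blast+
  then show ?thesis
    using i l unfolding l_def by auto
qed

lemma borel_measurable_endpoint_dist:
  fixes \<psi> :: "real \<Rightarrow> ennreal" and ai bi :: "'i \<Rightarrow> real"
  assumes "\<And>i. i \<in> I \<Longrightarrow> ai i < bi i"
    and disj: "disjoint_family_on (\<lambda>i. {ai i<..<bi i}) I"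
    and [measurable]: "\<psi> \<in> borel_measurable borel"
  shows "(\<lambda>x. \<psi> (endpoint_dist I ai bi x) * indicator (\<Union>i\<in>I. {ai i<..<bi i}) x) \<in> borel_measurable borel"
proof -
  txt \<open>The definite description in endpoint_dist is not obviously measurable, but on the union
    the function is a countable supremum of measurable functions with at most one nonzero term.\<close>
  let ?F = "\<lambda>i x. \<psi> (min (x - ai i) (bi i - x)) * indicator {ai i<..<bi i} x"
  have "countable I"
    using assms(1,2) by (rule countable_disjoint_Ioo_family)
  have "\<psi> (endpoint_dist I ai bi x) * indicator (\<Union>i\<in>I. {ai i<..<bi i}) x = (SUP i\<in>I. ?F i x)" for x
  proof (cases "x \<in> (\<Union>i\<in>I. {ai i<..<bi i})")
    case True
    then obtain i where i: "i \<in> I" "x \<in> {ai i<..<bi i}"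
      by blast
    have others: "?F j x = 0" if "j \<in> I" "j \<noteq> i" for j
    proof -
      have "x \<notin> {ai j<..<bi j}"
        using disj i that unfolding disjoint_family_on_def by blast
      then show ?thesis
        by simp
    qed
    have "?F j x \<le> ?F i x" if "j \<in> I" for j
    proof (cases "j = i")
      case False
      then show ?thesis
        using others[OF that False] by (simp only: zero_le)
    qed simp
    then have "(SUP j\<in>I. ?F j x) = ?F i x"
      using i(1) by (intro antisym SUP_least SUP_upper)
    then show ?thesis
      using True i disj by (simp add: endpoint_dist_eq)
  next
    case False
    then have "(SUP j\<in>I. ?F j x) = 0"
      by (intro antisym SUP_least) (auto split: split_indicator)
    with False show ?thesis
      by simp
  qed
  then have "(\<lambda>x. \<psi> (endpoint_dist I ai bi x) * indicator (\<Union>i\<in>I. {ai i<..<bi i}) x) = (\<lambda>x. SUP i\<in>I. ?F i x)"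
    by (rule ext)
  then show ?thesis
    using \<open>countable I\<close> by simp
qed

lemma nn_integral_endpoint_dist_le:
  fixes \<psi> :: "real \<Rightarrow> ennreal" and ai bi :: "'i \<Rightarrow> real"
  assumes intervals: "\<And>i. i \<in> I \<Longrightarrow> ai i < bi i"
    and disj: "disjoint_family_on (\<lambda>i. {ai i<..<bi i}) I"
    and psi_meas[measurable]: "\<psi> \<in> borel_measurable borel"
  shows "(\<integral>\<^sup>+x\<in>(\<Union>i\<in>I. {ai i<..<bi i}). \<psi> (endpoint_dist I ai bi x) \<partial>lborel)
    \<le> 2 * (\<integral>\<^sup>+i. (\<integral>\<^sup>+t\<in>{0<..<bi i - ai i}. \<psi> t \<partial>lborel) \<partial>count_space I)"
proof -
  define U where "U = (\<Union>i\<in>I. {ai i<..<bi i})"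
  define g where "g = (\<lambda>x. \<psi> (endpoint_dist I ai bi x) * indicator U x)"
  have [measurable]: "g \<in> borel_measurable borel"
    unfolding g_def U_def by (rule borel_measurable_endpoint_dist[OF intervals disj psi_meas])
  have "(\<integral>\<^sup>+x\<in>U. \<psi> (endpoint_dist I ai bi x) \<partial>lborel) = (\<integral>\<^sup>+x\<in>U. g x \<partial>lborel)"
    by (intro nn_integral_cong) (simp add: g_def split: split_indicator)
  also have "\<dots> = (\<integral>\<^sup>+i. (\<integral>\<^sup>+x\<in>{ai i<..<bi i}. g x \<partial>lborel) \<partial>count_space I)"
    unfolding U_def using intervals disj countable_disjoint_Ioo_family
    by (intro set_nn_integral_UN_countable) auto
  also have "\<dots> = (\<integral>\<^sup>+i. (\<integral>\<^sup>+x\<in>{ai i<..<bi i}. \<psi> (min (x - ai i) (bi i - x)) \<partial>lborel) \<partial>count_space I)"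
    using disj by (intro nn_integral_cong) (auto simp: g_def U_def endpoint_dist_eq split: split_indicator)
  also have "\<dots> \<le> (\<integral>\<^sup>+i. 2 * (\<integral>\<^sup>+t\<in>{0<..<bi i - ai i}. \<psi> t \<partial>lborel) \<partial>count_space I)"
    by (intro nn_integral_mono nn_integral_min_dist_endpoints_le) (rule psi_meas)
  also have "\<dots> = 2 * (\<integral>\<^sup>+i. (\<integral>\<^sup>+t\<in>{0<..<bi i - ai i}. \<psi> t \<partial>lborel) \<partial>count_space I)"
    by (simp add: nn_integral_cmult)
  finally show ?thesis
    unfolding U_def .
qed

lemma nn_integral_abs_ln_endpoint_dist_finite:
  fixes ai bi :: "'i \<Rightarrow> real"
  assumes intervals: "\<And>i. i \<in> I \<Longrightarrow> ai i < bi i"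
    and disj: "disjoint_family_on (\<lambda>i. {ai i<..<bi i}) I"
    and lengths: "(\<integral>\<^sup>+i. ennreal (bi i - ai i) \<partial>count_space I) < \<infinity>"
    and summable: "(\<lambda>i. (bi i - ai i) * \<bar>ln (bi i - ai i)\<bar>) summable_on I"
  shows "(\<integral>\<^sup>+x\<in>(\<Union>i\<in>I. {ai i<..<bi i}). ennreal \<bar>ln (endpoint_dist I ai bi x)\<bar> \<partial>lborel) < \<infinity>"
proof -
  have "(\<integral>\<^sup>+x\<in>(\<Union>i\<in>I. {ai i<..<bi i}). ennreal \<bar>ln (endpoint_dist I ai bi x)\<bar> \<partial>lborel)
      \<le> 2 * (\<integral>\<^sup>+i. (\<integral>\<^sup>+t\<in>{0<..<bi i - ai i}. ennreal \<bar>ln t\<bar> \<partial>lborel) \<partial>count_space I)"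
    using intervals disj by (rule nn_integral_endpoint_dist_le) measurable
  also have "\<dots> \<le> 2 * (\<integral>\<^sup>+i. ennreal ((bi i - ai i) * \<bar>ln (bi i - ai i)\<bar>)
      + 4 * ennreal (bi i - ai i) \<partial>count_space I)"
    using intervals by (intro mult_left_mono nn_integral_mono nn_integral_abs_ln_Ioo_le) auto
  also have "\<dots> < \<infinity>"
  proof -
    have "(\<integral>\<^sup>+i. ennreal ((bi i - ai i) * \<bar>ln (bi i - ai i)\<bar>) \<partial>count_space I) < \<infinity>"
      using summable intervals by (intro nn_integral_count_space_finite_if_summable_on) (auto simp: less_imp_le)
    with lengths show ?thesis
      by (simp add: nn_integral_add nn_integral_cmult ennreal_mult_less_top)
  qed
  finally show ?thesis .
qed

lemma nn_integral_endpoint_dist_powr_finite: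
  fixes ai bi :: "'i \<Rightarrow> real" and \<delta> :: real
  assumes intervals: "\<And>i. i \<in> I \<Longrightarrow> ai i < bi i"
    and disj: "disjoint_family_on (\<lambda>i. {ai i<..<bi i}) I"
    and \<delta>: "0 < \<delta>" "\<delta> < 1"
    and summable: "(\<lambda>i. (bi i - ai i) powr (1 - \<delta>)) summable_on I"
  shows "(\<integral>\<^sup>+x\<in>(\<Union>i\<in>I. {ai i<..<bi i}). ennreal (endpoint_dist I ai bi x powr (-\<delta>)) \<partial>lborel) < \<infinity>"
proof -
  have "(\<integral>\<^sup>+x\<in>(\<Union>i\<in>I. {ai i<..<bi i}). ennreal (endpoint_dist I ai bi x powr (-\<delta>)) \<partial>lborel)
      \<le> 2 * (\<integral>\<^sup>+i. (\<integral>\<^sup>+t\<in>{0<..<bi i - ai i}. ennreal (t powr (-\<delta>)) \<partial>lborel) \<partial>count_space I)"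
    using intervals disj by (rule nn_integral_endpoint_dist_le) measurable
  also have "\<dots> = 2 * (\<integral>\<^sup>+i. ennreal ((bi i - ai i) powr (1 - \<delta>) / (1 - \<delta>)) \<partial>count_space I)"
  proof (intro arg_cong2[where f = "(*)"] nn_integral_cong refl)
    fix i
    assume "i \<in> space (count_space I)"
    then show "(\<integral>\<^sup>+t\<in>{0<..<bi i - ai i}. ennreal (t powr (-\<delta>)) \<partial>lborel)
        = ennreal ((bi i - ai i) powr (1 - \<delta>) / (1 - \<delta>))"
      using nn_integral_powr_Ioo[of "bi i - ai i" "-\<delta>"] intervals \<delta> by simp
  qed
  also have "\<dots> < \<infinity>"
  proof -
    have "(\<lambda>i. (bi i - ai i) powr (1 - \<delta>) / (1 - \<delta>)) summable_on I"
      unfolding divide_inverse using summable by (rule summable_on_cmult_left)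
    then have "(\<integral>\<^sup>+i. ennreal ((bi i - ai i) powr (1 - \<delta>) / (1 - \<delta>)) \<partial>count_space I) < \<infinity>"
      using \<delta> by (intro nn_integral_count_space_finite_if_summable_on) auto
    then show ?thesis
      by (simp add: ennreal_mult_less_top)
  qed
  finally show ?thesis .
qed

lemma nn_integral_abs_ln_endpoint_dist_finite_bounded:
  fixes f :: "real \<Rightarrow> real" and ai bi :: "'i \<Rightarrow> real"
  assumes [measurable]: "f \<in> borel_measurable borel"
    and intervals: "\<And>i. i \<in> I \<Longrightarrow> ai i < bi i"
    and disj: "disjoint_family_on (\<lambda>i. {ai i<..<bi i}) I"
    and bounded: "AE x in lborel. x \<in> (\<Union>i\<in>I. {ai i<..<bi i}) \<longrightarrow> f x \<le> C"
    and lengths: "(\<integral>\<^sup>+i. ennreal (bi i - ai i) \<partial>count_space I) < \<infinity>"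
    and summable: "(\<lambda>i. (bi i - ai i) * \<bar>ln (bi i - ai i)\<bar>) summable_on I"
  shows "(\<integral>\<^sup>+x\<in>(\<Union>i\<in>I. {ai i<..<bi i}). ennreal \<bar>ln (endpoint_dist I ai bi x)\<bar> \<partial>density lborel f) < \<infinity>"
proof -
  define U where "U = (\<Union>i\<in>I. {ai i<..<bi i})"
  define g where "g = (\<lambda>x. ennreal \<bar>ln (endpoint_dist I ai bi x)\<bar> * indicator U x)"
  have [measurable]: "g \<in> borel_measurable borel"
    unfolding g_def U_def by (rule borel_measurable_endpoint_dist[OF intervals disj]) measurable
  have "(\<integral>\<^sup>+x\<in>U. ennreal \<bar>ln (endpoint_dist I ai bi x)\<bar> \<partial>density lborel f) = integral\<^sup>N (density lborel f) g"
    by (simp add: g_def)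
  also have "\<dots> = (\<integral>\<^sup>+x. ennreal (f x) * g x \<partial>lborel)"
    by (rule nn_integral_density) simp_all
  also have "\<dots> \<le> (\<integral>\<^sup>+x. ennreal C * g x \<partial>lborel)"
  proof (rule nn_integral_mono_AE)
    show "AE x in lborel. ennreal (f x) * g x \<le> ennreal C * g x"
      using bounded by eventually_elim
        (auto simp: g_def U_def intro!: mult_right_mono ennreal_leI split: split_indicator)
  qed
  also have "\<dots> = ennreal C * integral\<^sup>N lborel g"
    by (rule nn_integral_cmult) simp
  also have "\<dots> = ennreal C * (\<integral>\<^sup>+x\<in>U. ennreal \<bar>ln (endpoint_dist I ai bi x)\<bar> \<partial>lborel)"
    by (simp add: g_def)
  also have "\<dots> < \<infinity>"
    unfolding U_def using nn_integral_abs_ln_endpoint_dist_finite[OF intervals disj lengths summable]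
    by (simp add: ennreal_mult_less_top)
  finally show ?thesis
    unfolding U_def .
qed

lemma nn_integral_abs_ln_endpoint_dist_finite_entropy:
  fixes f :: "real \<Rightarrow> real" and ai bi :: "'i \<Rightarrow> real" and \<delta> :: real
  assumes [measurable]: "f \<in> borel_measurable borel" and f_nonneg: "\<And>x. 0 \<le> f x"
    and intervals: "\<And>i. i \<in> I \<Longrightarrow> ai i < bi i"
    and disj: "disjoint_family_on (\<lambda>i. {ai i<..<bi i}) I"
    and sub: "(\<Union>i\<in>I. {ai i<..<bi i}) \<subseteq> {a..b}"
    and entropy: "(\<integral>\<^sup>+x. ennreal (ln (f x)) \<partial>density lborel f) < \<infinity>"
    and \<delta>: "0 < \<delta>" "\<delta> < 1"
    and summable: "(\<lambda>i. (bi i - ai i) powr (1 - \<delta>)) summable_on I"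
  shows "(\<integral>\<^sup>+x\<in>(\<Union>i\<in>I. {ai i<..<bi i}). ennreal \<bar>ln (endpoint_dist I ai bi x)\<bar> \<partial>density lborel f) < \<infinity>"
proof -
  define U where "U = (\<Union>i\<in>I. {ai i<..<bi i})"
  define l where "l = endpoint_dist I ai bi"
  define K where "K = (b - a) powr \<delta>"
  define g where "g = (\<lambda>x. ennreal \<bar>ln (l x)\<bar> * indicator U x)"
  define h where "h = (\<lambda>x. ennreal (l x powr (-\<delta>)) * indicator U x)"
  have [measurable]: "g \<in> borel_measurable borel"
    unfolding g_def U_def l_def by (rule borel_measurable_endpoint_dist[OF intervals disj]) measurable
  have [measurable]: "h \<in> borel_measurable borel"
    unfolding h_def U_def l_def
    by (rule borel_measurable_endpoint_dist[OF intervals disj, of "\<lambda>t. ennreal (t powr (-\<delta>))"]) measurable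
  have pointwise: "ennreal (f x) * g x
      \<le> ennreal (1 / \<delta>) * (ennreal (f x * max 0 (ln (f x))) + h x + ennreal K * indicator {a..b} x)" for x
  proof (cases "x \<in> U")
    case True
    then have l: "0 < l x" "l x \<le> b - a" and "x \<in> {a..b}"
      using endpoint_dist_pos_le[OF disj sub] sub unfolding U_def l_def by blast+
    have "ennreal (f x) * g x = ennreal (f x * \<bar>ln (l x)\<bar>)"
      using True f_nonneg[of x] by (simp add: g_def ennreal_mult)
    also have "\<dots> \<le> ennreal (1 / \<delta> * (f x * max 0 (ln (f x)) + l x powr (-\<delta>) + K))"
      unfolding K_def using f_nonneg \<delta> l by (intro ennreal_leI mult_abs_ln_le_entropy_plus_powr)
    also have "\<dots> = ennreal (1 / \<delta>) * (ennreal (f x * max 0 (ln (f x))) + ennreal (l x powr (-\<delta>)) + ennreal K)"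
      using \<delta> f_nonneg[of x] by (subst ennreal_mult) (simp_all add: ennreal_plus K_def)
    also have "\<dots> = ennreal (1 / \<delta>) * (ennreal (f x * max 0 (ln (f x))) + h x + ennreal K * indicator {a..b} x)"
      using True \<open>x \<in> {a..b}\<close> by (simp add: h_def)
    finally show ?thesis .
  qed (simp add: g_def)
  have entropy': "(\<integral>\<^sup>+x. ennreal (f x * max 0 (ln (f x))) \<partial>lborel) < \<infinity>"
    using entropy f_nonneg by (simp add: nn_integral_density ennreal_mult ennreal_max_0)
  have "(\<integral>\<^sup>+x\<in>U. ennreal \<bar>ln (l x)\<bar> \<partial>density lborel f) = integral\<^sup>N (density lborel f) g"
    by (simp add: g_def)
  also have "\<dots> = (\<integral>\<^sup>+x. ennreal (f x) * g x \<partial>lborel)"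
    by (rule nn_integral_density) simp_all
  also have "\<dots> \<le> (\<integral>\<^sup>+x. ennreal (1 / \<delta>) *
      (ennreal (f x * max 0 (ln (f x))) + h x + ennreal K * indicator {a..b} x) \<partial>lborel)"
    by (intro nn_integral_mono pointwise)
  also have "\<dots> = ennreal (1 / \<delta>) * ((\<integral>\<^sup>+x. ennreal (f x * max 0 (ln (f x))) \<partial>lborel)
      + (\<integral>\<^sup>+x. h x \<partial>lborel) + ennreal K * emeasure lborel {a..b})"
    by (simp add: nn_integral_cmult nn_integral_add nn_integral_cmult_indicator)
  also have "\<dots> < \<infinity>"
    using entropy' nn_integral_endpoint_dist_powr_finite[OF intervals disj \<delta> summable]
    by (simp add: h_def U_def l_def ennreal_mult_less_top emeasure_lborel_Icc_eq)
  finally show ?thesis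
    unfolding U_def l_def .
qed

theorem mainTheorem8:
  fixes f :: "real \<Rightarrow> real" and \<mu> :: "real measure" and A :: "real set"
    and a b :: real and I :: "'i set" and ai bi :: "'i \<Rightarrow> real"
  assumes f_meas: "f \<in> borel_measurable borel"
    and f_nonneg: "\<And>x. f x \<ge> 0"
    and mu_def: "\<mu> = density lborel f"
    and prob: "prob_space \<mu>"
    and supp: "msupp \<mu> \<subseteq> {a..b}"
    and ent: "(\<integral>\<^sup>+ x. ennreal (ln (f x)) \<partial>\<mu>) < \<infinity>"
    and A_borel: "A \<in> sets borel"
    and intervals: "\<And>i. i \<in> I \<Longrightarrow> ai i < bi i"
    and disj: "disjoint_family_on (\<lambda>i. {ai i<..<bi i}) I"
    and decomp: "interior (A \<inter> msupp \<mu>) = (\<Union>i\<in>I. {ai i<..<bi i})"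
    and cases:
      "((\<exists>C. AE x in lborel. x \<in> A \<longrightarrow> f x \<le> C)
          \<and> (\<lambda>i. (bi i - ai i) * \<bar>ln (bi i - ai i)\<bar>) summable_on I)
       \<or> (\<exists>\<delta>. 0 < \<delta> \<and> \<delta> < 1 \<and> (\<lambda>i. (bi i - ai i) powr (1 - \<delta>)) summable_on I)"
  shows "(\<integral>\<^sup>+ x \<in> (\<Union>i\<in>I. {ai i<..<bi i}). ennreal \<bar>ln (endpoint_dist I ai bi x)\<bar> \<partial>\<mu>) < \<infinity>"
proof -
  have "(\<Union>i\<in>I. {ai i<..<bi i}) \<subseteq> A \<inter> msupp \<mu>"
    using decomp interior_subset by metis
  then have UA: "(\<Union>i\<in>I. {ai i<..<bi i}) \<subseteq> A" and Uab: "(\<Union>i\<in>I. {ai i<..<bi i}) \<subseteq> {a..b}"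
    using supp by auto
  from cases show ?thesis
  proof (elim disjE conjE exE)
    fix C
    assume C: "AE x in lborel. x \<in> A \<longrightarrow> f x \<le> C"
      and summable: "(\<lambda>i. (bi i - ai i) * \<bar>ln (bi i - ai i)\<bar>) summable_on I"
    have "(\<integral>\<^sup>+i. ennreal (bi i - ai i) \<partial>count_space I) \<le> emeasure lborel {a..b}"
      using intervals disj Uab by (rule nn_integral_interval_lengths_le) measurable
    then have "(\<integral>\<^sup>+i. ennreal (bi i - ai i) \<partial>count_space I) < \<infinity>"
      by (rule le_less_trans) (simp add: emeasure_lborel_Icc_eq)
    moreover have "AE x in lborel. x \<in> (\<Union>i\<in>I. {ai i<..<bi i}) \<longrightarrow> f x \<le> C"
      using C by eventually_elim (use UA in blast)
    ultimately show ?thesis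
      unfolding mu_def using f_meas intervals disj summable
      by (intro nn_integral_abs_ln_endpoint_dist_finite_bounded)
  next
    fix \<delta> :: real
    assume "0 < \<delta>" "\<delta> < 1" "(\<lambda>i. (bi i - ai i) powr (1 - \<delta>)) summable_on I"
    with f_meas f_nonneg intervals disj Uab ent show ?thesis
      unfolding mu_def by (intro nn_integral_abs_ln_endpoint_dist_finite_entropy)
  qed
qed

end
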